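(* Let $\mathbb M^{3}$ be Minkowski $3$-space with form $\langle-,-\rangle$ of signature $-++$, and let $\mathcal K\subset\mathbb P^2_\mathbb R$ be the set of lines $\mathbb Rp$ with $\langle p,p\rangle<0$, with its hyperbolic metric, and $\partial\mathcal K$ the set of lines $\mathbb Rf$ with $f\ne0$, $\langle f,f\rangle=0$. Let $\pmb f=\mathbb Rf\in\partial\mathcal K$ and let $\pmb r,\pmb r'\in\mathcal K$ lie on a same horocycle containing $\pmb f$. Then $\nu_{\pmb r}=\nu_{\pmb r'}$, where for $\pmb s=\mathbb Rs\in\mathcal K$ the frequency of the photon $\pmb f$ measured by $\pmb s$ is $\nu_{\pmb s}:=\frac{|\langle f,s\rangle|}{\sqrt{-\langle s,s\rangle}}$ (for a fixed representative $f$).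
   Context: The hyperbolic metric on $\mathcal K$: identifying $T_{\pmb p}\mathbb P^2_\mathbb R=\mathrm{Lin}(\mathbb Rp,p^\perp)$, put $\langle\varphi_1,\varphi_2\rangle_{\pmb p}:=-\frac{\langle\varphi_1(p),\varphi_2(p)\rangle}{\langle p,p\rangle}$; this is Klein's model of the hyperbolic plane (curvature $-1$), with isometry group containing $\mathrm{SO}^+(1,2)$ acting projectively. A parabolic isometry is a non-identity orientation-preserving isometry with exactly one fixed point, which lies in $\partial\mathcal K$. A horocycle containing $\pmb f$ is the orbit of a point of $\mathcal K$ under a one-parameter group of parabolic isometries fixing $\pmb f$ (equivalently, a curve ending at $\pmb f$ orthogonal to every geodesic having $\pmb f$ as a vertex). The quantity $\nu_{\pmb s}$ is, up to a constant factor independent of $\pmb s$, the energy (frequency) of the photon with momentum $f$ as measured by the observer $\mathbb Rs$, i.e. $|\pi'[\pmb s]f|$ with $\pi'[\pmb s]f=\frac{\langle f,s\rangle}{\langle s,s\rangle}s$. *)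

theory Defs
  imports "HOL-Analysis.Analysis"
begin

definition mink :: "real^3 \<Rightarrow> real^3 \<Rightarrow> real" where
  "mink p q = - (p $ 1) * (q $ 1) + (p $ 2) * (q $ 2) + (p $ 3) * (q $ 3)"

definition same_line :: "real^3 \<Rightarrow> real^3 \<Rightarrow> bool" where
  "same_line p q \<longleftrightarrow> p \<noteq> 0 \<and> (\<exists>c. c \<noteq> 0 \<and> q = c *\<^sub>R p)"

definition in_K :: "real^3 \<Rightarrow> bool" where
  "in_K p \<longleftrightarrow> mink p p < 0"

definition in_bdK :: "real^3 \<Rightarrow> bool" where
  "in_bdK f \<longleftrightarrow> f \<noteq> 0 \<and> mink f f = 0"

text \<open>SO+(1,2): determinant one, preserving the form and the time orientation.
  Acting projectively these are exactly the orientation-preserving isometries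
  of Klein's model.\<close>
definition SO12plus :: "real^3^3 \<Rightarrow> bool" where
  "SO12plus A \<longleftrightarrow> det A = 1 \<and> (\<forall>x y. mink (A *v x) (A *v y) = mink x y) \<and> A $ 1 $ 1 > 0"

definition fixes_point :: "real^3^3 \<Rightarrow> real^3 \<Rightarrow> bool" where
  "fixes_point A x \<longleftrightarrow> x \<noteq> 0 \<and> (\<exists>c. A *v x = c *\<^sub>R x)"

definition parabolic_fixing :: "real^3^3 \<Rightarrow> real^3 \<Rightarrow> bool" where
  "parabolic_fixing A f \<longleftrightarrow>
     SO12plus A \<and> A \<noteq> mat 1 \<and> fixes_point A f \<and>
     (\<forall>x. fixes_point A x \<and> mink x x \<le> 0 \<longrightarrow> same_line f x)"

definition one_param_parabolic :: "(real \<Rightarrow> real^3^3) \<Rightarrow> real^3 \<Rightarrow> bool" where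
  "one_param_parabolic \<phi> f \<longleftrightarrow>
     continuous_on UNIV \<phi> \<and> \<phi> 0 = mat 1 \<and>
     (\<forall>s t. \<phi> (s + t) = \<phi> s ** \<phi> t) \<and>
     (\<forall>t. t \<noteq> 0 \<longrightarrow> parabolic_fixing (\<phi> t) f)"

text \<open>R r and R r' lie on a same horocycle containing R f: both lie on the orbit of
  some point R x of K under a one-parameter group of parabolic isometries fixing R f.\<close>
definition same_horocycle :: "real^3 \<Rightarrow> real^3 \<Rightarrow> real^3 \<Rightarrow> bool" where
  "same_horocycle f r r' \<longleftrightarrow>
     (\<exists>\<phi> x a b. one_param_parabolic \<phi> f \<and> in_K x \<and>
        same_line (\<phi> a *v x) r \<and> same_line (\<phi> b *v x) r')"

definition nu :: "real^3 \<Rightarrow> real^3 \<Rightarrow> real" where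
  "nu f s = \<bar>mink f s\<bar> / sqrt (- mink s s)"

end

theory Submission
  imports Defs
begin

text \<open>A parabolic isometry A fixing the boundary point R f satisfies A f = c f with
  \<bar>c\<bar> = 1, so \<bar>\<langle>f, A x\<rangle>\<bar> = \<bar>\<langle>A f, A x\<rangle>\<bar> = \<bar>\<langle>f, x\<rangle>\<bar>, and \<open>nu f\<close> is invariant under A;
  it is also invariant under rescaling of the observer, hence constant along horocycles.
  To see \<bar>c\<bar> = 1: since A preserves the form, 1/c is an eigenvalue of the adjoint of A
  and hence of A. If c^2 \<noteq> 1, an eigenvector g for 1/c is null, because
  \<langle>g, g\<rangle> = \<langle>g, g\<rangle> / c^2; so R g is a fixed point in the closed disc, hence R g = R f,
  which forces c = 1/c.\<close>

lemma det_eq_0_iff_nontrivial_kernel: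
  fixes A :: "'a::field^'n^'n"
  shows "det A = 0 \<longleftrightarrow> (\<exists>x. x \<noteq> 0 \<and> A *v x = 0)"
  using invertible_det_nz invertible_left_inverse matrix_left_invertible_ker by metis

lemma eigenvector_of_transpose:
  fixes A :: "real^'n^'n"
  assumes "y \<noteq> 0" and "transpose A *v y = c *\<^sub>R y"
  obtains x where "x \<noteq> 0" and "A *v x = c *\<^sub>R x"
proof -
  have eig_iff: "M *v v = c *\<^sub>R v \<longleftrightarrow> (M - c *\<^sub>R mat 1) *v v = 0" for M :: "real^'n^'n" and v
    by (simp add: matrix_vector_mult_diff_rdistrib scaleR_matrix_vector_assoc[symmetric])
  have "det (transpose A - c *\<^sub>R mat 1) = 0"
    using assms eig_iff det_eq_0_iff_nontrivial_kernel by blast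
  moreover have "transpose A - c *\<^sub>R mat 1 = transpose (A - c *\<^sub>R mat 1)"
    by (simp add: transpose_def vec_eq_iff mat_def)
  ultimately have "det (A - c *\<^sub>R mat 1) = 0"
    by simp
  then show ?thesis
    using that eig_iff det_eq_0_iff_nontrivial_kernel by blast
qed

definition time_flip :: "real^3 \<Rightarrow> real^3" where
  "time_flip y = (\<chi> i. if i = 1 then - (y $ 1) else y $ i)"

lemma mink_eq_inner_time_flip: "mink x y = x \<bullet> time_flip y"
  by (simp add: mink_def time_flip_def inner_vec_def sum_3)

lemma time_flip_scaleR: "time_flip (c *\<^sub>R y) = c *\<^sub>R time_flip y"
  by (simp add: time_flip_def vec_eq_iff)

lemma time_flip_eq_0_iff [simp]: "time_flip y = 0 \<longleftrightarrow> y = 0"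
  by (auto simp: time_flip_def vec_eq_iff forall_3)

lemma mink_scaleR_left [simp]: "mink (c *\<^sub>R x) y = c * mink x y"
  by (simp add: mink_def algebra_simps)

lemma mink_scaleR_right [simp]: "mink x (c *\<^sub>R y) = c * mink x y"
  by (simp add: mink_def algebra_simps)

lemma mink_preserving_transpose:
  assumes "\<forall>x y. mink (A *v x) (A *v y) = mink x y"
  shows "transpose A *v time_flip (A *v y) = time_flip y"
proof -
  have "x \<bullet> (transpose A *v time_flip (A *v y)) = x \<bullet> time_flip y" for x
  proof -
    have "x \<bullet> (transpose A *v time_flip (A *v y)) = (A *v x) \<bullet> time_flip (A *v y)"
      by (metis dot_lmul_matrix inner_commute transpose_matrix_vector)
    also have "\<dots> = x \<bullet> time_flip y"
      using assms by (simp flip: mink_eq_inner_time_flip)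
    finally show ?thesis .
  qed
  then show ?thesis
    using vector_eq_ldot by blast
qed

lemma mink_preserving_eigenvalue_inverse:
  assumes pres: "\<forall>x y. mink (A *v x) (A *v y) = mink x y"
    and "f \<noteq> 0" and Af: "A *v f = c *\<^sub>R f"
  obtains g where "c \<noteq> 0" and "g \<noteq> 0" and "A *v g = inverse c *\<^sub>R g"
proof -
  have adj: "c *\<^sub>R (transpose A *v time_flip f) = time_flip f"
    using mink_preserving_transpose[OF pres, of f]
    by (simp add: Af time_flip_scaleR matrix_vector_mult_scaleR)
  have "time_flip f \<noteq> 0"
    using \<open>f \<noteq> 0\<close> by simp
  with adj have "c \<noteq> 0"
    by auto
  have "transpose A *v time_flip f = inverse c *\<^sub>R (c *\<^sub>R (transpose A *v time_flip f))"
    using \<open>c \<noteq> 0\<close> by simp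
  then have "transpose A *v time_flip f = inverse c *\<^sub>R time_flip f"
    by (simp only: adj)
  then obtain g where "g \<noteq> 0" and "A *v g = inverse c *\<^sub>R g"
    using eigenvector_of_transpose \<open>time_flip f \<noteq> 0\<close> by blast
  with \<open>c \<noteq> 0\<close> that show ?thesis
    by blast
qed

lemma mink_preserving_eigenvector_null:
  assumes "\<forall>x y. mink (A *v x) (A *v y) = mink x y"
    and "A *v g = d *\<^sub>R g" and "d\<^sup>2 \<noteq> 1"
  shows "mink g g = 0"
proof -
  have "mink g g = d\<^sup>2 * mink g g"
    using assms(1)[rule_format, of g g] by (simp add: assms(2) power2_eq_square)
  then show ?thesis
    using \<open>d\<^sup>2 \<noteq> 1\<close> by simp
qed

lemma parabolic_fixing_eigenvalue:
  assumes par: "parabolic_fixing A f" and Af: "A *v f = c *\<^sub>R f"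
  shows "\<bar>c\<bar> = 1"
proof (rule ccontr)
  assume "\<bar>c\<bar> \<noteq> 1"
  then have c2: "c\<^sup>2 \<noteq> 1"
    by (auto simp: power2_eq_1_iff)
  have pres: "\<forall>x y. mink (A *v x) (A *v y) = mink x y" and "f \<noteq> 0"
    using par unfolding parabolic_fixing_def SO12plus_def fixes_point_def by auto
  obtain g where "c \<noteq> 0" and "g \<noteq> 0" and Ag: "A *v g = inverse c *\<^sub>R g"
    using mink_preserving_eigenvalue_inverse[OF pres \<open>f \<noteq> 0\<close> Af] by blast
  have "(inverse c)\<^sup>2 \<noteq> 1"
    using c2 by (simp add: power_inverse)
  then have "mink g g = 0"
    using mink_preserving_eigenvector_null[OF pres Ag] by blast
  then have "same_line f g"
    using par \<open>g \<noteq> 0\<close> Ag unfolding parabolic_fixing_def fixes_point_def by auto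
  then obtain k where "g = k *\<^sub>R f"
    unfolding same_line_def by blast
  then have "c *\<^sub>R g = inverse c *\<^sub>R g"
    using Af Ag by (simp add: matrix_vector_mult_scaleR)
  then have "c = inverse c"
    using \<open>g \<noteq> 0\<close> by simp
  then have "c\<^sup>2 = 1"
    using \<open>c \<noteq> 0\<close> by (simp add: power2_eq_square field_simps)
  with c2 show False ..
qed

lemma nu_scaleR:
  assumes "c \<noteq> 0"
  shows "nu f (c *\<^sub>R s) = nu f s"
proof -
  have "- mink (c *\<^sub>R s) (c *\<^sub>R s) = c\<^sup>2 * - mink s s"
    by (simp add: power2_eq_square)
  then have "sqrt (- mink (c *\<^sub>R s) (c *\<^sub>R s)) = \<bar>c\<bar> * sqrt (- mink s s)"
    by (simp only: real_sqrt_mult real_sqrt_abs)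
  then show ?thesis
    using assms unfolding nu_def by (simp add: abs_mult)
qed

lemma nu_parabolic_fixing:
  assumes "parabolic_fixing A f"
  shows "nu f (A *v x) = nu f x"
proof -
  have pres: "\<forall>x y. mink (A *v x) (A *v y) = mink x y"
    using assms unfolding parabolic_fixing_def SO12plus_def by auto
  obtain c where Af: "A *v f = c *\<^sub>R f"
    using assms unfolding parabolic_fixing_def fixes_point_def by auto
  have "mink f x = c * mink f (A *v x)"
    using pres by (metis Af mink_scaleR_left)
  then have "\<bar>mink f (A *v x)\<bar> = \<bar>mink f x\<bar>"
    using parabolic_fixing_eigenvalue[OF assms Af] by (simp add: abs_mult)
  then show ?thesis
    using pres unfolding nu_def by simp
qed

lemma nu_one_param_parabolic:
  assumes "one_param_parabolic \<phi> f"
  shows "nu f (\<phi> t *v x) = nu f x"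
  using assms nu_parabolic_fixing unfolding one_param_parabolic_def
  by (cases "t = 0") auto

lemma nu_same_line:
  assumes "same_line p q"
  shows "nu f q = nu f p"
  using assms nu_scaleR unfolding same_line_def by auto

theorem lemma4:
  fixes f r r' :: "real^3"
  assumes "in_bdK f" and "in_K r" and "in_K r'"
    and "same_horocycle f r r'"
  shows "nu f r = nu f r'"
proof -
  obtain \<phi> x a b where \<phi>: "one_param_parabolic \<phi> f"
    and "same_line (\<phi> a *v x) r" and "same_line (\<phi> b *v x) r'"
    using assms(4) unfolding same_horocycle_def by blast
  then have "nu f r = nu f x" and "nu f r' = nu f x"
    using nu_same_line nu_one_param_parabolic[OF \<phi>] by metis+
  then show ?thesis
    by simp
qed

end
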